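(* Let $\alpha\in[0,1)$, $c_{\mathrm{TX}}>0$, $\phi>0$, $\theta=\phi/c_{\mathrm{TX}}$, integers $N_S\geq B\geq1$, and let $\lambda_j^*$ ($j\geq 0$), $\bar M_{MP}^{\lambda,p_0}$ and $\bar C_{MP}^{\lambda,p_0}$ be as defined in the context. Let $$\mathcal L=\bigcup_{j\geq 1}\left[\{(\lambda,1):\lambda\in(\lambda_{j-1}^*,\lambda_j^* )\}\cup\{(\lambda_j^*,p_0):p_0\in[0,1]\}\right],$$ ordered by: $(\lambda^{(1)},p_0^{(1)})\succ(\lambda^{(2)},p_0^{(2)})$ iff either $\lambda^{(1)}>\lambda^{(2)}$, or $\lambda^{(1)}=\lambda^{(2)}$ and $p_0^{(1)}<p_0^{(2)}$. Then: (i) the map $(\lambda,p_0)\mapsto(\bar C_{MP}^{\lambda,p_0},\bar M_{MP}^{\lambda,p_0})$ is continuous on $\mathcal L$ (with the order topology of $\succ$), i.e. for each $j\geq1$ it is continuous in $\lambda\in(\lambda_{j-1}^*,\lambda_j^* )$ (with $p_0=1$) and in $p_0\in[0,1]$ (with $\lambda=\lambda_j^*$), its limit as $\lambda\uparrow\lambda_j^*$ equals its value at $(\lambda_j^*,1)$, and its limit as $\lambda\downarrow\lambda_j^*$ equals its value at $(\lambda_j^*,0)$; (ii) for all $(\lambda^{(1)},p_0^{(1)}),(\lambda^{(2)},p_0^{(2)})\in\mathcal L$ with $(\lambda^{(1)},p_0^{(1)})\succ(\lambda^{(2)},p_0^{(2)})$, $$\bar C_{MP}^{\lambda^{(1)},p_0^{(1)}}<\bar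 C_{MP}^{\lambda^{(2)},p_0^{(2)}}\quad\text{and}\quad \bar M_{MP}^{\lambda^{(1)},p_0^{(1)}}>\bar M_{MP}^{\lambda^{(2)},p_0^{(2)}}.$$
   Context: Let $\lambda_{\mathrm{th}}=(1+\sqrt{\theta})^{-2}$, $v_{\mathrm{th}}(\lambda,0)=\sqrt{\lambda\theta}+\frac{\lambda}{2}+\sqrt{\lambda}\sqrt{\sqrt{\lambda\theta}+\frac{\lambda}{4}}$, $\eta_j(\lambda)=1-\alpha^{j}(1-\sqrt{\lambda\theta})-v_{\mathrm{th}}(\lambda,0)$ for $j\geq 0$, and $\lambda_j^*$ the unique solution in $[0,\lambda_{\mathrm{th}}]$ of $\eta_j(\lambda)=0$. For $\lambda\in(0,\lambda_{\mathrm{th}})$, $p_0\in[0,1]$, consider the process $V_0=1$ and for $k\geq0$: if $V_k>v_{\mathrm{th}}(\lambda,0)$ set $t_k=1$, $S_{M,k}=\frac{1}{\sqrt{\lambda\theta}}-\frac{1}{V_k}$; if $V_k<v_{\mathrm{th}}(\lambda,0)$ set $t_k=S_{M,k}=0$; if $V_k=v_{\mathrm{th}}(\lambda,0)$ set $t_k=1$, $S_{M,k}=\frac{1}{\sqrt{\lambda\theta}}-\frac{1}{V_k}$ with probability $p_0$ (independently over time) and $t_k=S_{M,k}=0$ otherwise; then $\hat V_k=\frac{V_k}{1+V_kt_kS_{M,k}}$, $V_{k+1}=1-\alpha(1-\hat V_k)$. Define $\bar M_{MP}^{\lambda,p_0}=\lim_{T\to\infty}\mathbb E[\frac{1}{T+1}\sum_{k=0}^T\hat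 V_k]$ (average MSE) and $\bar C_{MP}^{\lambda,p_0}=\lim_{T\to\infty}\mathbb E[\frac{1}{T+1}\sum_{k=0}^T\frac{1}{N_S}t_k(c_{\mathrm{TX}}+\phi S_{M,k})]$ (average per-sensor sensing-transmission cost). This is the myopic policy of a coordinated sensing scheme with infinite ambient SNR, tracking $X_{k+1}=\sqrt\alpha X_k+Z_k$ with unit stationary variance. *)

theory Defs
  imports "HOL-Probability.Probability"
begin

text \<open>Threshold quantities; theta = phi / c_TX is passed as the parameter th.\<close>

definition lam_th :: "real \<Rightarrow> real" where
  "lam_th th = 1 / (1 + sqrt th)^2"

definition v_th :: "real \<Rightarrow> real \<Rightarrow> real" where
  "v_th th lam = sqrt (lam * th) + lam / 2 + sqrt lam * sqrt (sqrt (lam * th) + lam / 4)"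

definition eta :: "real \<Rightarrow> real \<Rightarrow> nat \<Rightarrow> real \<Rightarrow> real" where
  "eta \<alpha> th j lam = 1 - \<alpha> ^ j * (1 - sqrt (lam * th)) - v_th th lam"

definition lam_star :: "real \<Rightarrow> real \<Rightarrow> nat \<Rightarrow> real" where
  "lam_star \<alpha> th j = (THE lam. lam \<in> {0..lam_th th} \<and> eta \<alpha> th j lam = 0)"

definition tx_decision :: "real \<Rightarrow> real \<Rightarrow> real \<Rightarrow> real \<Rightarrow> bool pmf" where
  "tx_decision th lam p0 v =
     (if v > v_th th lam then return_pmf True
      else if v < v_th th lam then return_pmf False
      else bernoulli_pmf p0)"

definition t_ind :: "bool \<Rightarrow> real" where
  "t_ind t = (if t then 1 else 0)"

definition S_M :: "real \<Rightarrow> real \<Rightarrow> real \<Rightarrow> bool \<Rightarrow> real" where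
  "S_M th lam v t = (if t then 1 / sqrt (lam * th) - 1 / v else 0)"

definition V_hat :: "real \<Rightarrow> real \<Rightarrow> real \<Rightarrow> bool \<Rightarrow> real" where
  "V_hat th lam v t = v / (1 + v * t_ind t * S_M th lam v t)"

text \<open>Distribution of the trajectory prefix [(V_0,t_0),...,(V_T,t_T)].\<close>

primrec mp_traj :: "real \<Rightarrow> real \<Rightarrow> real \<Rightarrow> real \<Rightarrow> nat \<Rightarrow> (real \<times> bool) list pmf" where
  "mp_traj \<alpha> th lam p0 0 = map_pmf (\<lambda>b. [(1, b)]) (tx_decision th lam p0 1)"
| "mp_traj \<alpha> th lam p0 (Suc n) =
     bind_pmf (mp_traj \<alpha> th lam p0 n)
       (\<lambda>xs. let v' = 1 - \<alpha> * (1 - V_hat th lam (fst (last xs)) (snd (last xs)))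
             in map_pmf (\<lambda>b. xs @ [(v', b)]) (tx_decision th lam p0 v'))"

definition M_MP :: "real \<Rightarrow> real \<Rightarrow> real \<Rightarrow> real \<Rightarrow> real \<Rightarrow> real" where
  "M_MP \<alpha> cTX \<phi> lam p0 =
     lim (\<lambda>T. measure_pmf.expectation (mp_traj \<alpha> (\<phi> / cTX) lam p0 T)
        (\<lambda>xs. (\<Sum>x\<leftarrow>xs. V_hat (\<phi> / cTX) lam (fst x) (snd x)) / real (T + 1)))"

definition C_MP :: "real \<Rightarrow> real \<Rightarrow> real \<Rightarrow> nat \<Rightarrow> real \<Rightarrow> real \<Rightarrow> real" where
  "C_MP \<alpha> cTX \<phi> NS lam p0 =
     lim (\<lambda>T. measure_pmf.expectation (mp_traj \<alpha> (\<phi> / cTX) lam p0 T)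
        (\<lambda>xs. (\<Sum>x\<leftarrow>xs. (1 / real NS) * t_ind (snd x)
                 * (cTX + \<phi> * S_M (\<phi> / cTX) lam (fst x) (snd x))) / real (T + 1)))"

definition L_set :: "real \<Rightarrow> real \<Rightarrow> (real \<times> real) set" where
  "L_set \<alpha> th = (\<Union>j\<in>{1..}.
      {(lam, 1) | lam. lam \<in> {lam_star \<alpha> th (j - 1) <..< lam_star \<alpha> th j}}
    \<union> {(lam_star \<alpha> th j, p0) | p0. p0 \<in> {0..1}})"

definition mp_succ :: "real \<times> real \<Rightarrow> real \<times> real \<Rightarrow> bool" where
  "mp_succ x y = (fst x > fst y \<or> (fst x = fst y \<and> snd x < snd y))"

end

theory Submission
  imports Defs
begin

text \<open>For \<open>\<alpha> > 0\<close> and \<open>\<lambda>\<close> strictly between \<open>\<lambda>*(j - 1)\<close> and \<open>\<lambda>*(j)\<close> the myopic policy is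
  periodic: after a transmission the variance runs through \<open>1 - \<alpha>^i (1 - sqrt (\<lambda> \<theta>))\<close>,
  \<open>i = 1, 2, ...\<close>, and crosses the threshold exactly in slot j. At \<open>\<lambda> = \<lambda>*(j)\<close> the threshold is
  hit exactly, so a cycle lasts j slots with probability \<open>p\<^sub>0\<close> and j + 1 slots otherwise.
  Solving the Poisson equation of the chain on these finitely many states yields both averages
  in closed form, as reward per cycle over the expected cycle length \<open>j + 1 - p\<^sub>0\<close>. Continuity
  and strict monotonicity along the order then reduce to elementary inequalities for these
  closed forms, and the pieces fit together because \<open>p\<^sub>0 = 0\<close> at \<open>\<lambda>*(j)\<close> is the deterministic
  cycle of length j + 1. For \<open>\<alpha> = 0\<close> the chain never leaves variance 1 and everything is
  explicit.\<close>

section \<open>Long-run averages of the myopic chain\<close>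

definition mp_next :: "real \<Rightarrow> real \<Rightarrow> real \<Rightarrow> real \<Rightarrow> bool \<Rightarrow> real" where
  "mp_next \<alpha> th lam v b = 1 - \<alpha> * (1 - V_hat th lam v b)"

definition mp_avg :: "real \<Rightarrow> real \<Rightarrow> real \<Rightarrow> real \<Rightarrow> (real \<Rightarrow> bool \<Rightarrow> real) \<Rightarrow> nat \<Rightarrow> real" where
  "mp_avg \<alpha> th lam p0 g T = measure_pmf.expectation (mp_traj \<alpha> th lam p0 T)
     (\<lambda>xs. (\<Sum>x\<leftarrow>xs. g (fst x) (snd x)) / real (T + 1))"

lemma M_MP_eq_lim: "M_MP \<alpha> cTX \<phi> lam p0 = lim (mp_avg \<alpha> (\<phi> / cTX) lam p0 (V_hat (\<phi> / cTX) lam))"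
  unfolding M_MP_def mp_avg_def ..

lemma C_MP_eq_lim:
  "C_MP \<alpha> cTX \<phi> NS lam p0 = lim (mp_avg \<alpha> (\<phi> / cTX) lam p0
     (\<lambda>v b. 1 / real NS * t_ind b * (cTX + \<phi> * S_M (\<phi> / cTX) lam v b)))"
  unfolding C_MP_def mp_avg_def ..

lemma mp_traj_Suc:
  "mp_traj \<alpha> th lam p0 (Suc T) = bind_pmf (mp_traj \<alpha> th lam p0 T)
     (\<lambda>xs. map_pmf (\<lambda>b. xs @ [(mp_next \<alpha> th lam (fst (last xs)) (snd (last xs)), b)])
        (tx_decision th lam p0 (mp_next \<alpha> th lam (fst (last xs)) (snd (last xs)))))"
  by (simp add: mp_next_def Let_def)

lemma finite_set_pmf_mp_traj: "finite (set_pmf (mp_traj \<alpha> th lam p0 T))"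
  by (induction T) (auto simp: Let_def)

lemma expectation_bind_pmf_finite:
  fixes h :: "'b \<Rightarrow> real"
  assumes "finite (set_pmf p)" "\<And>x. finite (set_pmf (f x))"
  shows "measure_pmf.expectation (bind_pmf p f) h
       = measure_pmf.expectation p (\<lambda>x. measure_pmf.expectation (f x) h)"
  using assms by (subst pmf_expectation_bind[of "set_pmf p"]) (auto simp: integral_measure_pmf)

lemma expectation_add_finite:
  fixes f g :: "'a \<Rightarrow> real"
  assumes "finite (set_pmf p)"
  shows "measure_pmf.expectation p (\<lambda>x. f x + g x)
       = measure_pmf.expectation p f + measure_pmf.expectation p g"
  using assms by (intro Bochner_Integration.integral_add integrable_measure_pmf_finite)

locale mp_invariant_set =
  fixes \<alpha> th lam p0 :: real and R :: "real set"
  assumes start: "1 \<in> R"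
    and closed: "\<And>v b. v \<in> R \<Longrightarrow> b \<in> set_pmf (tx_decision th lam p0 v) \<Longrightarrow> mp_next \<alpha> th lam v b \<in> R"
begin

abbreviation "traj \<equiv> mp_traj \<alpha> th lam p0"

abbreviation last_next :: "(real \<times> bool) list \<Rightarrow> real" where
  "last_next xs \<equiv> mp_next \<alpha> th lam (fst (last xs)) (snd (last xs))"

lemma last_next_in: "xs \<in> set_pmf (traj T) \<Longrightarrow> last_next xs \<in> R"
proof (induction T arbitrary: xs)
  case 0
  then show ?case using closed[OF start] by auto
next
  case (Suc T)
  then obtain ys b where "ys \<in> set_pmf (traj T)" "xs = ys @ [(last_next ys, b)]"
    and "b \<in> set_pmf (tx_decision th lam p0 (last_next ys))"
    by (auto simp del: mp_traj.simps simp: mp_traj_Suc)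
  then show ?case using Suc.IH closed by simp
qed

context
  fixes g :: "real \<Rightarrow> bool \<Rightarrow> real" and h :: "real \<Rightarrow> real" and \<rho> :: real
  assumes poisson: "\<And>v. v \<in> R \<Longrightarrow> measure_pmf.expectation (tx_decision th lam p0 v)
                      (\<lambda>b. g v b + h (mp_next \<alpha> th lam v b)) = \<rho> + h v"
begin

lemma expectation_reward_plus_bias:
  "measure_pmf.expectation (traj T) (\<lambda>xs. (\<Sum>x\<leftarrow>xs. g (fst x) (snd x)) + h (last_next xs))
     = real (T + 1) * \<rho> + h 1"
proof (induction T)
  case 0
  then show ?case using poisson[OF start] by simp
next
  case (Suc T)
  let ?S = "\<lambda>xs. \<Sum>x\<leftarrow>xs. g (fst x) (snd x)"
  have "measure_pmf.expectation (traj (Suc T)) (\<lambda>xs. ?S xs + h (last_next xs))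
      = measure_pmf.expectation (traj T) (\<lambda>xs. measure_pmf.expectation
          (tx_decision th lam p0 (last_next xs))
          (\<lambda>b. ?S xs + (g (last_next xs) b + h (mp_next \<alpha> th lam (last_next xs) b))))"
    unfolding mp_traj_Suc
    by (subst expectation_bind_pmf_finite) (simp_all add: finite_set_pmf_mp_traj add_ac)
  also have "\<dots> = measure_pmf.expectation (traj T) (\<lambda>xs. (?S xs + h (last_next xs)) + \<rho>)"
  proof (intro integral_cong_AE)
    have "measure_pmf.expectation (tx_decision th lam p0 v) (\<lambda>b. c + (g v b + h (mp_next \<alpha> th lam v b)))
        = c + h v + \<rho>" if "v \<in> R" for v c
      by (subst expectation_add_finite) (simp_all add: poisson[OF that])
    then show "AE xs in traj T. measure_pmf.expectation (tx_decision th lam p0 (last_next xs))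
        (\<lambda>b. ?S xs + (g (last_next xs) b + h (mp_next \<alpha> th lam (last_next xs) b)))
      = ?S xs + h (last_next xs) + \<rho>"
      by (auto simp: AE_measure_pmf_iff last_next_in)
  qed simp_all
  also have "\<dots> = measure_pmf.expectation (traj T) (\<lambda>xs. ?S xs + h (last_next xs)) + \<rho>"
    by (simp add: expectation_add_finite finite_set_pmf_mp_traj)
  finally show ?case using Suc.IH by (simp add: algebra_simps)
qed

lemma mp_avg_tendsto_gain:
  assumes "finite R"
  shows "mp_avg \<alpha> th lam p0 g \<longlonglongrightarrow> \<rho>"
proof -
  define e where "e T = measure_pmf.expectation (traj T) (\<lambda>xs. h (last_next xs))" for T
  define B where "B = (\<Sum>v\<in>R. \<bar>h v\<bar>)"
  have e_bound: "\<bar>e T\<bar> \<le> B" for T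
  proof -
    have "\<bar>h (last_next xs)\<bar> \<le> B" if "xs \<in> set_pmf (traj T)" for xs
      unfolding B_def using assms last_next_in[OF that] by (intro member_le_sum) auto
    then have "\<bar>e T\<bar> \<le> measure_pmf.expectation (traj T) (\<lambda>xs. B)"
      unfolding e_def
      by (intro order_trans[OF integral_abs_bound] integral_mono_AE)
        (auto simp: AE_measure_pmf_iff integrable_measure_pmf_finite finite_set_pmf_mp_traj)
    then show ?thesis by simp
  qed
  have avg: "mp_avg \<alpha> th lam p0 g T = \<rho> + (h 1 - e T) / real (T + 1)" for T
    using expectation_reward_plus_bias[of T]
    by (simp add: mp_avg_def e_def expectation_add_finite finite_set_pmf_mp_traj field_simps)
  have "(\<lambda>T. (h 1 - e T) / real (T + 1)) \<longlonglongrightarrow> 0"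
  proof (rule Lim_null_comparison)
    show "\<forall>\<^sub>F T in sequentially.
        norm ((h 1 - e T) / real (T + 1)) \<le> (\<bar>h 1\<bar> + B) * inverse (real (Suc T))"
      using e_bound by (intro always_eventually allI)
        (simp add: divide_inverse abs_mult mult_right_mono order_trans[OF abs_triangle_ineq4])
    show "(\<lambda>T. (\<bar>h 1\<bar> + B) * inverse (real (Suc T))) \<longlonglongrightarrow> 0"
      by (intro tendsto_mult_right_zero LIMSEQ_inverse_real_of_nat)
  qed
  then show ?thesis
    unfolding avg using tendsto_add[OF tendsto_const, of _ 0 sequentially \<rho>] by simp
qed

end

end

section \<open>The thresholds\<close>

lemma one_plus_sqrt_pos: "th \<ge> 0 \<Longrightarrow> 1 + sqrt th > 0"
  by (simp add: add_pos_nonneg)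

lemma lam_th_pos: "th > 0 \<Longrightarrow> lam_th th > 0"
  using one_plus_sqrt_pos[of th] by (simp add: lam_th_def)

lemma sqrt_lam_th_mult: "th > 0 \<Longrightarrow> sqrt (lam_th th * th) = sqrt th / (1 + sqrt th)"
  using one_plus_sqrt_pos[of th] by (simp add: lam_th_def power_divide real_sqrt_divide)

lemma sqrt_lam_th_mult_less_one: "th > 0 \<Longrightarrow> sqrt (lam_th th * th) < 1"
  using one_plus_sqrt_pos[of th] by (simp add: sqrt_lam_th_mult)

lemma sqrt_mult_less_one:
  assumes "th > 0" "0 \<le> lam" "lam \<le> lam_th th"
  shows "sqrt (lam * th) < 1"
proof -
  have "sqrt (lam * th) \<le> sqrt (lam_th th * th)"
    using assms by (intro real_sqrt_le_mono mult_right_mono) auto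
  then show ?thesis using sqrt_lam_th_mult_less_one[OF assms(1)] by linarith
qed

lemma v_th_lam_th:
  assumes "th > 0"
  shows "v_th th (lam_th th) = 1"
proof -
  define s where "s = sqrt th"
  have s: "s > 0" using assms by (simp add: s_def)
  have lam: "lam_th th = 1 / (1 + s)^2" by (simp add: lam_th_def s_def)
  have "s / (1 + s) + lam_th th / 4 = (4 * s * (1 + s) + 1) / (4 * (1 + s)^2)"
    using s by (simp add: lam add_divide_distrib power2_eq_square)
  also have "\<dots> = ((2 * s + 1) / (2 * (1 + s)))^2"
    by (simp add: power_divide power2_eq_square algebra_simps)
  finally have "s / (1 + s) + lam_th th / 4 = ((2 * s + 1) / (2 * (1 + s)))^2" .
  then have "sqrt (s / (1 + s) + lam_th th / 4) = (2 * s + 1) / (2 * (1 + s))"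
    using s by simp
  moreover have "sqrt (lam_th th) = 1 / (1 + s)"
    using s by (simp add: lam real_sqrt_divide)
  ultimately have "v_th th (lam_th th)
      = s / (1 + s) + lam_th th / 2 + 1 / (1 + s) * ((2 * s + 1) / (2 * (1 + s)))"
    using sqrt_lam_th_mult[OF assms] by (simp add: v_th_def s_def)
  also have "\<dots> = 1"
    using s by (simp add: lam divide_simps power2_eq_square) (simp add: algebra_simps)
  finally show ?thesis .
qed

lemma v_th_strict_mono:
  assumes "th > 0" "0 \<le> a" "a < b"
  shows "v_th th a < v_th th b"
proof -
  have r: "sqrt (a * th) \<le> sqrt (b * th)"
    using assms by (intro real_sqrt_le_mono) (simp add: mult_right_mono)
  then have "sqrt a * sqrt (sqrt (a * th) + a / 4) \<le> sqrt b * sqrt (sqrt (b * th) + b / 4)"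
    using assms r by (intro mult_mono real_sqrt_le_mono add_mono) auto
  then show ?thesis using r assms unfolding v_th_def by linarith
qed

lemma v_th_less_one: "th > 0 \<Longrightarrow> 0 \<le> lam \<Longrightarrow> lam < lam_th th \<Longrightarrow> v_th th lam < 1"
  using v_th_strict_mono[of th lam "lam_th th"] v_th_lam_th by simp

text \<open>The conditional variance i slots after the last transmission.\<close>

definition idle_var :: "real \<Rightarrow> real \<Rightarrow> real \<Rightarrow> nat \<Rightarrow> real" where
  "idle_var \<alpha> th lam i = 1 - \<alpha> ^ i * (1 - sqrt (lam * th))"

lemma eta_eq_idle_var: "eta \<alpha> th j lam = idle_var \<alpha> th lam j - v_th th lam"
  by (simp add: eta_def idle_var_def)

lemma eta_strict_antimono:
  assumes "th > 0" "0 \<le> \<alpha>" "\<alpha> < 1" "0 \<le> a" "a < b"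
  shows "eta \<alpha> th j b < eta \<alpha> th j a"
proof -
  have "(1 - \<alpha> ^ j) * sqrt (a * th) \<le> (1 - \<alpha> ^ j) * sqrt (b * th)"
    using assms by (intro mult_left_mono real_sqrt_le_mono) (auto simp: power_le_one)
  moreover have "sqrt a * sqrt (sqrt (a * th) + a / 4) \<le> sqrt b * sqrt (sqrt (b * th) + b / 4)"
    using assms by (intro mult_mono real_sqrt_le_mono add_mono) auto
  ultimately show ?thesis
    using assms by (simp add: eta_def v_th_def algebra_simps)
qed

lemma eta_antimono:
  "th > 0 \<Longrightarrow> 0 \<le> \<alpha> \<Longrightarrow> \<alpha> < 1 \<Longrightarrow> 0 \<le> a \<Longrightarrow> a \<le> b \<Longrightarrow> eta \<alpha> th j b \<le> eta \<alpha> th j a"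
  using eta_strict_antimono[of th \<alpha> a b j] by (cases "a = b") auto

lemma eta_mono_index:
  assumes "th > 0" "0 \<le> \<alpha>" "\<alpha> < 1" "0 \<le> lam" "lam \<le> lam_th th" "i \<le> k"
  shows "eta \<alpha> th i lam \<le> eta \<alpha> th k lam"
  using assms sqrt_mult_less_one[of th lam]
  by (simp add: eta_def power_decreasing mult_right_mono)

lemma eta_strict_mono_index:
  assumes "th > 0" "0 < \<alpha>" "\<alpha> < 1" "0 \<le> lam" "lam \<le> lam_th th" "i < k"
  shows "eta \<alpha> th i lam < eta \<alpha> th k lam"
  using assms sqrt_mult_less_one[of th lam]
  by (simp add: eta_def power_strict_decreasing mult_strict_right_mono)

lemma eta_at_zero: "eta \<alpha> th j 0 = 1 - \<alpha> ^ j"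
  by (simp add: eta_def v_th_def)

lemma eta_at_lam_th: "th > 0 \<Longrightarrow> eta \<alpha> th j (lam_th th) = - (\<alpha> ^ j) * (1 - sqrt (lam_th th * th))"
  by (simp add: eta_def v_th_lam_th)

lemma lam_star_eqI:
  assumes "th > 0" "0 \<le> \<alpha>" "\<alpha> < 1" "0 \<le> x" "x \<le> lam_th th" "eta \<alpha> th j x = 0"
  shows "lam_star \<alpha> th j = x"
  unfolding lam_star_def
proof (rule the_equality)
  fix y assume y: "y \<in> {0..lam_th th} \<and> eta \<alpha> th j y = 0"
  show "y = x"
    using eta_strict_antimono[OF assms(1-3), of x y j] eta_strict_antimono[OF assms(1-3), of y x j]
      y assms by (cases x y rule: linorder_cases) auto
qed (use assms in auto)

lemma lam_star_root:
  assumes "th > 0" "0 \<le> \<alpha>" "\<alpha> < 1"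
  shows "0 \<le> lam_star \<alpha> th j \<and> lam_star \<alpha> th j \<le> lam_th th \<and> eta \<alpha> th j (lam_star \<alpha> th j) = 0"
proof -
  have "eta \<alpha> th j (lam_th th) \<le> 0"
    using assms sqrt_lam_th_mult_less_one[of th] by (simp add: eta_at_lam_th)
  moreover have "0 \<le> eta \<alpha> th j 0"
    using assms by (simp add: eta_at_zero power_le_one)
  moreover have "continuous_on {0..lam_th th} (eta \<alpha> th j)"
    unfolding eta_def v_th_def by (intro continuous_intros) auto
  ultimately obtain x where "0 \<le> x" "x \<le> lam_th th" "eta \<alpha> th j x = 0"
    using IVT2'[of "eta \<alpha> th j" "lam_th th" 0 0] lam_th_pos[OF assms(1)] by auto
  then show ?thesis using lam_star_eqI[OF assms] by simp
qed

lemma lam_star_0: "th > 0 \<Longrightarrow> 0 \<le> \<alpha> \<Longrightarrow> \<alpha> < 1 \<Longrightarrow> lam_star \<alpha> th 0 = 0"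
  by (rule lam_star_eqI) (auto simp: eta_at_zero lam_th_pos less_imp_le)

lemma lam_star_alpha_0: "th > 0 \<Longrightarrow> 1 \<le> j \<Longrightarrow> lam_star 0 th j = lam_th th"
  by (rule lam_star_eqI) (auto simp: eta_at_lam_th lam_th_pos less_imp_le)

lemma lam_star_bounds:
  assumes "th > 0" "0 < \<alpha>" "\<alpha> < 1" "1 \<le> j"
  shows "0 < lam_star \<alpha> th j \<and> lam_star \<alpha> th j < lam_th th"
proof -
  note root = lam_star_root[OF assms(1) _ assms(3), of j]
  have "\<alpha> ^ j < 1" using assms by (simp add: power_less_one_iff)
  then have "lam_star \<alpha> th j \<noteq> 0" using root assms eta_at_zero[of \<alpha> th j] by auto
  moreover have "lam_star \<alpha> th j \<noteq> lam_th th"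
    using root assms sqrt_lam_th_mult_less_one[of th] by (auto simp: eta_at_lam_th)
  ultimately show ?thesis using root assms by auto
qed

lemma lam_star_strict_mono:
  assumes "th > 0" "0 < \<alpha>" "\<alpha> < 1"
  shows "lam_star \<alpha> th j < lam_star \<alpha> th (Suc j)"
proof (rule ccontr)
  assume not_less: "\<not> ?thesis"
  note root = lam_star_root[OF assms(1) less_imp_le[OF assms(2)] assms(3)]
  have "0 = eta \<alpha> th j (lam_star \<alpha> th j)"
    using root by simp
  also have "\<dots> < eta \<alpha> th (Suc j) (lam_star \<alpha> th j)"
    using eta_strict_mono_index[OF assms, of "lam_star \<alpha> th j" j "Suc j"] root by auto
  also have "\<dots> \<le> eta \<alpha> th (Suc j) (lam_star \<alpha> th (Suc j))"
    using root not_less assms by (intro eta_antimono) auto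
  also have "\<dots> = 0"
    using root by simp
  finally show False by simp
qed

section \<open>The transmission cycle\<close>

lemma bernoulli_pmf_1: "bernoulli_pmf 1 = return_pmf True"
  by (rule pmf_eqI) (simp add: indicator_def)

lemma V_hat_no_tx [simp]: "V_hat th lam v False = v"
  by (simp add: V_hat_def t_ind_def S_M_def)

lemma V_hat_tx: "v \<noteq> 0 \<Longrightarrow> V_hat th lam v True = sqrt (lam * th)"
  by (simp add: V_hat_def t_ind_def S_M_def field_simps)

lemma mp_next_no_tx: "mp_next \<alpha> th lam (idle_var \<alpha> th lam i) False = idle_var \<alpha> th lam (Suc i)"
  by (simp add: mp_next_def idle_var_def algebra_simps)

lemma mp_next_tx: "v \<noteq> 0 \<Longrightarrow> mp_next \<alpha> th lam v True = idle_var \<alpha> th lam 1"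
  by (simp add: mp_next_def idle_var_def V_hat_tx)

text \<open>Renewal-reward: expected reward of one cycle over its expected length j + 1 - q.\<close>

definition cycle_gain :: "(real \<Rightarrow> bool \<Rightarrow> real) \<Rightarrow> real \<Rightarrow> real \<Rightarrow> real \<Rightarrow> nat \<Rightarrow> real \<Rightarrow> real" where
  "cycle_gain g \<alpha> th lam j q =
     ((\<Sum>i\<in>{1..<j}. g (idle_var \<alpha> th lam i) False) + q * g (idle_var \<alpha> th lam j) True
      + (1 - q) * (g (idle_var \<alpha> th lam j) False + g (idle_var \<alpha> th lam (Suc j)) True))
     / (real j + 1 - q)"

locale tx_cycle =
  fixes \<alpha> th lam p0 q :: real and j :: nat
  assumes alpha: "0 < \<alpha>" "\<alpha> < 1"
    and var: "0 \<le> lam * th" "lam * th < 1"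
    and j: "1 \<le> j" and q: "0 \<le> q" "q \<le> 1"
    and tx_start: "tx_decision th lam p0 1 = return_pmf True"
    and idle: "\<And>i. 1 \<le> i \<Longrightarrow> i < j \<Longrightarrow> tx_decision th lam p0 (idle_var \<alpha> th lam i) = return_pmf False"
    and decide: "tx_decision th lam p0 (idle_var \<alpha> th lam j) = bernoulli_pmf q"
    and tx_forced: "tx_decision th lam p0 (idle_var \<alpha> th lam (Suc j)) = return_pmf True"
begin

abbreviation u :: "nat \<Rightarrow> real" where
  "u \<equiv> idle_var \<alpha> th lam"

lemma idle_var_bounds: "1 \<le> i \<Longrightarrow> 0 < u i \<and> u i < 1"
proof -
  assume "1 \<le> i"
  then have a: "0 < \<alpha> ^ i" "\<alpha> ^ i < 1" using alpha by (auto simp: power_less_one_iff)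
  have r: "0 \<le> sqrt (lam * th)" "sqrt (lam * th) < 1" using var by auto
  have "\<alpha> ^ i * (1 - sqrt (lam * th)) \<le> \<alpha> ^ i"
    using a r by (intro mult_left_le) auto
  moreover have "0 < \<alpha> ^ i * (1 - sqrt (lam * th))"
    using a r by simp
  ultimately show ?thesis using a unfolding idle_var_def by linarith
qed

lemma inj_idle_var: "inj u"
proof (rule injI)
  fix a b assume "u a = u b"
  then have "\<alpha> ^ a = \<alpha> ^ b" using var by (simp add: idle_var_def)
  then show "a = b"
    using alpha power_strict_decreasing[of a b \<alpha>] power_strict_decreasing[of b a \<alpha>]
    by (cases a b rule: linorder_cases) auto
qed

definition states :: "real set" where
  "states = insert 1 (u ` {1..Suc j})"

lemma mp_invariant_states: "mp_invariant_set \<alpha> th lam p0 states"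
proof
  show "1 \<in> states" by (simp add: states_def)
next
  fix v b assume v: "v \<in> states" and b: "b \<in> set_pmf (tx_decision th lam p0 v)"
  have tx_u1: "mp_next \<alpha> th lam w True = u 1" if "w \<in> states" for w
    using that idle_var_bounds by (intro mp_next_tx) (force simp: states_def)
  show "mp_next \<alpha> th lam v b \<in> states"
  proof (cases b)
    case True
    then show ?thesis using tx_u1[OF v] j by (simp add: states_def)
  next
    case False
    then obtain k where k: "1 \<le> k" "k \<le> Suc j" "v = u k"
      using v b tx_start by (auto simp: states_def)
    moreover have "k \<noteq> Suc j"
      using k b False tx_forced by auto
    ultimately show ?thesis
      using False by (simp add: states_def mp_next_no_tx)
  qed
qed

definition gain :: "(real \<Rightarrow> bool \<Rightarrow> real) \<Rightarrow> real" where
  "gain g = cycle_gain g \<alpha> th lam j q"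

text \<open>The bias solving the Poisson equation, indexed by the number of slots since the last
  transmission: along the idle path it accumulates gain minus reward, and it vanishes at
  \<open>u 1\<close>, the state reached after every transmission.\<close>

definition bias_index :: "(real \<Rightarrow> bool \<Rightarrow> real) \<Rightarrow> nat \<Rightarrow> real" where
  "bias_index g k = (if k \<le> j then \<Sum>i\<in>{1..<k}. gain g - g (u i) False
                     else g (u (Suc j)) True - gain g)"

definition bias :: "(real \<Rightarrow> bool \<Rightarrow> real) \<Rightarrow> real \<Rightarrow> real" where
  "bias g v = (if v = 1 then g 1 True - gain g else bias_index g (inv_into {1..Suc j} u v))"

lemma bias_idle_var: "1 \<le> k \<Longrightarrow> k \<le> Suc j \<Longrightarrow> bias g (u k) = bias_index g k"
  using idle_var_bounds[of k] inj_idle_var by (simp add: bias_def inv_into_f_f inj_on_subset)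

lemma bias_after_tx: "w \<noteq> 0 \<Longrightarrow> bias g (mp_next \<alpha> th lam w True) = 0"
  using bias_idle_var[of 1] j by (simp add: mp_next_tx bias_index_def)

lemma poisson_equation_at_decision:
  "measure_pmf.expectation (tx_decision th lam p0 (u j))
     (\<lambda>b. g (u j) b + bias g (mp_next \<alpha> th lam (u j) b)) = gain g + bias g (u j)"
proof -
  have gain: "(real j + 1 - q) * gain g = (\<Sum>i\<in>{1..<j}. g (u i) False) + q * g (u j) True
      + (1 - q) * (g (u j) False + g (u (Suc j)) True)"
    using j q by (simp add: gain_def cycle_gain_def)
  have bias_j: "bias g (u j) = (real j - 1) * gain g - (\<Sum>i\<in>{1..<j}. g (u i) False)"
    using j bias_idle_var[of j] by (simp add: bias_index_def sum_subtractf of_nat_diff)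
  have bias_Suc_j: "bias g (u (Suc j)) = g (u (Suc j)) True - gain g"
    using j bias_idle_var[of "Suc j"] by (simp add: bias_index_def)
  have bias_tx: "bias g (mp_next \<alpha> th lam (u j) True) = 0"
    using j idle_var_bounds[of j] by (intro bias_after_tx) auto
  show ?thesis
    using decide q
    by (simp add: mp_next_no_tx bias_j bias_Suc_j bias_tx) (use gain in \<open>simp add: algebra_simps\<close>)
qed

lemma poisson_equation:
  assumes "v \<in> states"
  shows "measure_pmf.expectation (tx_decision th lam p0 v)
           (\<lambda>b. g v b + bias g (mp_next \<alpha> th lam v b)) = gain g + bias g v"
proof -
  consider "v = 1" | k where "1 \<le> k" "k < j" "v = u k" | "v = u j" | "v = u (Suc j)"
  proof -
    have "v = 1 \<or> (\<exists>k. 1 \<le> k \<and> k \<le> Suc j \<and> v = u k)"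
      using assms by (auto simp: states_def)
    then show ?thesis using that by (metis le_Suc_eq nat_less_le)
  qed
  then show ?thesis
  proof cases
    case 1
    then show ?thesis using tx_start bias_after_tx by (simp add: bias_def)
  next
    case (2 k)
    then show ?thesis
      using idle[of k] bias_idle_var[of k] bias_idle_var[of "Suc k"] j
      by (simp add: mp_next_no_tx bias_index_def)
  next
    case 3
    then show ?thesis using poisson_equation_at_decision by simp
  next
    case 4
    then show ?thesis
      using tx_forced bias_after_tx[of "u (Suc j)"] idle_var_bounds[of "Suc j"] bias_idle_var[of "Suc j"]
      by (simp add: bias_index_def)
  qed
qed

lemma mp_avg_tendsto_cycle_gain: "mp_avg \<alpha> th lam p0 g \<longlonglongrightarrow> cycle_gain g \<alpha> th lam j q"
proof -
  interpret mp_invariant_set \<alpha> th lam p0 states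
    by (rule mp_invariant_states)
  have "mp_avg \<alpha> th lam p0 g \<longlonglongrightarrow> gain g"
    by (rule mp_avg_tendsto_gain[of g "bias g"]) (simp_all add: poisson_equation states_def)
  then show ?thesis by (simp add: gain_def)
qed

end

definition tx_cost :: "real \<Rightarrow> real \<Rightarrow> nat \<Rightarrow> real \<Rightarrow> real \<Rightarrow> real \<Rightarrow> real" where
  "tx_cost cTX \<phi> NS th lam v = 1 / real NS * (cTX + \<phi> * (1 / sqrt (lam * th) - 1 / v))"

definition M_cycle :: "real \<Rightarrow> real \<Rightarrow> real \<Rightarrow> nat \<Rightarrow> real \<Rightarrow> real" where
  "M_cycle \<alpha> th lam j q =
     ((\<Sum>i\<in>{1..<j}. idle_var \<alpha> th lam i) + sqrt (lam * th) + (1 - q) * idle_var \<alpha> th lam j)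
     / (real j + 1 - q)"

definition C_cycle :: "real \<Rightarrow> real \<Rightarrow> real \<Rightarrow> real \<Rightarrow> nat \<Rightarrow> real \<Rightarrow> nat \<Rightarrow> real \<Rightarrow> real" where
  "C_cycle \<alpha> th cTX \<phi> NS lam j q =
     (q * tx_cost cTX \<phi> NS th lam (idle_var \<alpha> th lam j)
      + (1 - q) * tx_cost cTX \<phi> NS th lam (idle_var \<alpha> th lam (Suc j)))
     / (real j + 1 - q)"

context tx_cycle
begin

lemma M_MP_eq_M_cycle: "th = \<phi> / cTX \<Longrightarrow> M_MP \<alpha> cTX \<phi> lam p0 = M_cycle \<alpha> th lam j q"
  using limI[OF mp_avg_tendsto_cycle_gain[of "V_hat th lam"]]
    idle_var_bounds[of j] idle_var_bounds[of "Suc j"] j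
  by (simp add: M_MP_eq_lim cycle_gain_def M_cycle_def V_hat_tx algebra_simps)

lemma C_MP_eq_C_cycle: "th = \<phi> / cTX \<Longrightarrow> C_MP \<alpha> cTX \<phi> NS lam p0 = C_cycle \<alpha> th cTX \<phi> NS lam j q"
  using limI[OF mp_avg_tendsto_cycle_gain[of "\<lambda>v b. 1 / real NS * t_ind b * (cTX + \<phi> * S_M th lam v b)"]]
  by (simp add: C_MP_eq_lim cycle_gain_def C_cycle_def tx_cost_def t_ind_def S_M_def)

end

lemma tx_decision_above: "v_th th lam < v \<Longrightarrow> tx_decision th lam p0 v = return_pmf True"
  by (simp add: tx_decision_def)

lemma tx_decision_below: "v < v_th th lam \<Longrightarrow> tx_decision th lam p0 v = return_pmf False"
  by (simp add: tx_decision_def)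

lemma tx_decision_at: "tx_decision th lam p0 (v_th th lam) = bernoulli_pmf p0"
  by (simp add: tx_decision_def)

lemma lam_mult_th_less_one:
  "th > 0 \<Longrightarrow> 0 \<le> lam \<Longrightarrow> lam \<le> lam_th th \<Longrightarrow> 0 \<le> lam * th \<and> lam * th < 1"
  using sqrt_mult_less_one[of th lam] by simp

lemma tx_cycle_between_lam_star:
  assumes th: "th > 0" and alpha: "0 < \<alpha>" "\<alpha> < 1" and j: "1 \<le> j"
    and lam: "lam_star \<alpha> th (j - 1) < lam" "lam < lam_star \<alpha> th j"
  shows "tx_cycle \<alpha> th lam p0 1 j"
proof -
  have a0: "0 \<le> \<alpha>" using alpha by simp
  note root = lam_star_root[OF th a0 alpha(2)]
  have lam_pos: "0 < lam" and lam_less: "lam < lam_th th"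
    using lam root[of "j - 1"] lam_star_bounds[OF th alpha j] by auto
  have eta_j: "0 < eta \<alpha> th j lam"
    using eta_strict_antimono[OF th a0 alpha(2), of lam "lam_star \<alpha> th j" j] root[of j] lam lam_pos by simp
  show ?thesis
  proof
    show "tx_decision th lam p0 1 = return_pmf True"
      using v_th_less_one[OF th] lam_pos lam_less by (simp add: tx_decision_above)
  next
    fix i assume i: "1 \<le> i" "i < j"
    have "eta \<alpha> th i lam \<le> eta \<alpha> th (j - 1) lam"
      using eta_mono_index[OF th a0 alpha(2)] i lam_pos lam_less by simp
    also have "\<dots> < eta \<alpha> th (j - 1) (lam_star \<alpha> th (j - 1))"
      using eta_strict_antimono[OF th a0 alpha(2)] root lam by blast
    finally show "tx_decision th lam p0 (idle_var \<alpha> th lam i) = return_pmf False"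
      using root by (simp add: eta_eq_idle_var tx_decision_below)
  next
    show "tx_decision th lam p0 (idle_var \<alpha> th lam j) = bernoulli_pmf 1"
      using eta_j by (simp add: eta_eq_idle_var tx_decision_above bernoulli_pmf_1)
    have "eta \<alpha> th j lam \<le> eta \<alpha> th (Suc j) lam"
      using eta_mono_index[OF th a0 alpha(2)] lam_pos lam_less by simp
    then show "tx_decision th lam p0 (idle_var \<alpha> th lam (Suc j)) = return_pmf True"
      using eta_j by (simp add: eta_eq_idle_var tx_decision_above)
  qed (use alpha j lam_mult_th_less_one[OF th, of lam] lam_pos lam_less in auto)
qed

lemma tx_cycle_at_lam_star:
  assumes th: "th > 0" and alpha: "0 < \<alpha>" "\<alpha> < 1" and j: "1 \<le> j" and p: "0 \<le> p" "p \<le> 1"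
  shows "tx_cycle \<alpha> th (lam_star \<alpha> th j) p p j"
proof -
  define lam where "lam = lam_star \<alpha> th j"
  have lam: "0 < lam" "lam < lam_th th"
    using lam_star_bounds[OF th alpha j] by (auto simp: lam_def)
  have v_th: "v_th th lam = idle_var \<alpha> th lam j"
    using lam_star_root[OF th _ alpha(2), of j] alpha by (simp add: lam_def eta_eq_idle_var)
  have idle_var_strict_mono: "idle_var \<alpha> th lam i < idle_var \<alpha> th lam k" if "i < k" for i k
    using eta_strict_mono_index[OF th alpha, of lam i k] that lam by (simp add: eta_eq_idle_var)
  show ?thesis
    unfolding lam_def[symmetric]
  proof
    show "tx_decision th lam p 1 = return_pmf True"
      using v_th_less_one[OF th] lam by (simp add: tx_decision_above)
    show "tx_decision th lam p (idle_var \<alpha> th lam i) = return_pmf False" if "1 \<le> i" "i < j" for i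
      using idle_var_strict_mono[of i j] that by (simp add: v_th tx_decision_below)
    show "tx_decision th lam p (idle_var \<alpha> th lam j) = bernoulli_pmf p"
      using tx_decision_at[of th lam p] by (simp add: v_th)
    show "tx_decision th lam p (idle_var \<alpha> th lam (Suc j)) = return_pmf True"
      using idle_var_strict_mono[of j "Suc j"] by (simp add: v_th tx_decision_above)
  qed (use alpha j p lam_mult_th_less_one[OF th, of lam] lam in auto)
qed

section \<open>Continuity and monotonicity of the cycle averages\<close>

lemma idle_var_continuous [continuous_intros]:
  "isCont (\<lambda>l. idle_var \<alpha> th l k) x"
  unfolding idle_var_def by (intro continuous_intros)

lemma idle_var_ge_sqrt:
  assumes "0 \<le> \<alpha>" "\<alpha> \<le> 1" "sqrt (lam * th) \<le> 1"
  shows "sqrt (lam * th) \<le> idle_var \<alpha> th lam i"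
proof -
  have "\<alpha> ^ i * (1 - sqrt (lam * th)) \<le> 1 - sqrt (lam * th)"
    using assms by (intro mult_left_le_one_le) (auto simp: power_le_one)
  then show ?thesis by (simp add: idle_var_def)
qed

lemma idle_var_mono_lam:
  assumes "0 \<le> \<alpha>" "th > 0" "0 \<le> a" "a \<le> b"
  shows "idle_var \<alpha> th a i \<le> idle_var \<alpha> th b i"
proof -
  have "sqrt (a * th) \<le> sqrt (b * th)"
    using assms by (intro real_sqrt_le_mono mult_right_mono) auto
  then show ?thesis using assms by (simp add: idle_var_def mult_left_mono algebra_simps)
qed

lemma M_cycle_continuous: "real j + 1 - q \<noteq> 0 \<Longrightarrow> isCont (\<lambda>l. M_cycle \<alpha> th l j q) x"
  unfolding M_cycle_def by (intro continuous_intros) auto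

lemma C_cycle_continuous:
  assumes "0 \<le> \<alpha>" "\<alpha> < 1" "th > 0" "0 < x" "x \<le> lam_th th" "real j + 1 - q \<noteq> 0"
  shows "isCont (\<lambda>l. C_cycle \<alpha> th cTX \<phi> NS l j q) x"
proof -
  have r: "0 < sqrt (x * th)" "sqrt (x * th) \<le> 1"
    using assms sqrt_mult_less_one[of th x] by auto
  then have "idle_var \<alpha> th x k \<noteq> 0" for k
    using idle_var_ge_sqrt[OF assms(1) less_imp_le[OF assms(2)] r(2), of k] by linarith
  then show ?thesis
    unfolding C_cycle_def tx_cost_def using r assms(6) by (intro continuous_intros) auto
qed

lemma M_cycle_continuous_on_q: "1 \<le> j \<Longrightarrow> continuous_on {0..1} (M_cycle \<alpha> th lam j)"
  unfolding M_cycle_def by (intro continuous_intros) auto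

lemma C_cycle_continuous_on_q: "1 \<le> j \<Longrightarrow> continuous_on {0..1} (C_cycle \<alpha> th cTX \<phi> NS lam j)"
  unfolding C_cycle_def by (intro continuous_intros) auto

text \<open>Randomising with probability 0 at the j-th slot is the deterministic (j + 1)-slot cycle.\<close>

lemma M_cycle_shift: "1 \<le> j \<Longrightarrow> M_cycle \<alpha> th lam j 0 = M_cycle \<alpha> th lam (Suc j) 1"
  by (simp add: M_cycle_def sum.atLeastLessThan_Suc algebra_simps)

lemma C_cycle_shift: "C_cycle \<alpha> th cTX \<phi> NS lam j 0 = C_cycle \<alpha> th cTX \<phi> NS lam (Suc j) 1"
  by (simp add: C_cycle_def algebra_simps)

lemma M_cycle_strict_mono_lam:
  assumes "0 \<le> \<alpha>" "th > 0" "0 \<le> a" "a < b" "1 \<le> j"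
  shows "M_cycle \<alpha> th a j 1 < M_cycle \<alpha> th b j 1"
proof -
  have "(\<Sum>i\<in>{1..<j}. idle_var \<alpha> th a i) \<le> (\<Sum>i\<in>{1..<j}. idle_var \<alpha> th b i)"
    using idle_var_mono_lam[of \<alpha> th a b] assms by (intro sum_mono) auto
  moreover have "sqrt (a * th) < sqrt (b * th)"
    using assms by simp
  ultimately have "(\<Sum>i\<in>{1..<j}. idle_var \<alpha> th a i) + sqrt (a * th)
      < (\<Sum>i\<in>{1..<j}. idle_var \<alpha> th b i) + sqrt (b * th)"
    by linarith
  then show ?thesis
    using assms by (simp add: M_cycle_def divide_strict_right_mono)
qed

lemma inverse_diff_affine_strict_antimono:
  fixes r1 r2 A :: real
  assumes "0 < r1" "r1 < r2" "r2 \<le> 1" "0 \<le> A" "A < 1"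
  shows "1 / r2 - 1 / (1 - A + A * r2) < 1 / r1 - 1 / (1 - A + A * r1)"
proof -
  define u1 u2 where "u1 = 1 - A + A * r1" and "u2 = 1 - A + A * r2"
  have "r1 \<le> u1" "r2 \<le> u2"
    using assms mult_left_mono[of r1 1 "1 - A"] mult_left_mono[of r2 1 "1 - A"]
    by (auto simp: u1_def u2_def algebra_simps)
  then have "A * (r1 * r2) < u1 * u2"
    using assms mult_mono[of r1 u1 r2 u2] by (smt (verit) mult_pos_pos mult_less_cancel_right2)
  then have "A / (u1 * u2) < 1 / (r1 * r2)"
    using \<open>r1 \<le> u1\<close> \<open>r2 \<le> u2\<close> assms by (simp add: divide_simps)
  then have "(r2 - r1) * (A / (u1 * u2)) < (r2 - r1) * (1 / (r1 * r2))"
    using assms by (intro mult_strict_left_mono) auto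
  moreover have "1 / r1 - 1 / r2 = (r2 - r1) * (1 / (r1 * r2))"
    using assms by (simp add: field_simps)
  moreover have "1 / u1 - 1 / u2 = (r2 - r1) * (A / (u1 * u2))"
    using assms \<open>r1 \<le> u1\<close> \<open>r2 \<le> u2\<close> by (simp add: field_simps u1_def u2_def)
  ultimately show ?thesis unfolding u1_def u2_def by linarith
qed

lemma C_cycle_strict_antimono_lam:
  assumes "0 \<le> \<alpha>" "\<alpha> < 1" "th > 0" "0 < a" "a < b" "b \<le> lam_th th" "1 \<le> j" "NS > 0" "\<phi> > 0"
  shows "C_cycle \<alpha> th cTX \<phi> NS b j 1 < C_cycle \<alpha> th cTX \<phi> NS a j 1"
proof -
  have A: "0 \<le> \<alpha> ^ j" "\<alpha> ^ j < 1"
    using assms by (auto simp: power_less_one_iff)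
  have idle_var_eq: "idle_var \<alpha> th l j = 1 - \<alpha> ^ j + \<alpha> ^ j * sqrt (l * th)" for l
    by (simp add: idle_var_def algebra_simps)
  have "1 / sqrt (b * th) - 1 / idle_var \<alpha> th b j < 1 / sqrt (a * th) - 1 / idle_var \<alpha> th a j"
    unfolding idle_var_eq
    using assms A sqrt_mult_less_one[of th b] by (intro inverse_diff_affine_strict_antimono) auto
  then have "tx_cost cTX \<phi> NS th b (idle_var \<alpha> th b j) < tx_cost cTX \<phi> NS th a (idle_var \<alpha> th a j)"
    unfolding tx_cost_def using assms by (intro mult_strict_left_mono) auto
  then show ?thesis
    using assms by (simp add: C_cycle_def divide_strict_right_mono)
qed

lemma affine_ratio_strict_mono:
  fixes a b n t1 t2 :: real
  assumes "a < n * b" "0 < n" "0 \<le> t1" "t1 < t2"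
  shows "(a + t1 * b) / (n + t1) < (a + t2 * b) / (n + t2)"
proof -
  have "(a + t2 * b) * (n + t1) - (a + t1 * b) * (n + t2) = (t2 - t1) * (n * b - a)"
    by (simp add: algebra_simps)
  also have "\<dots> > 0"
    using assms by simp
  finally show ?thesis
    using assms by (simp add: divide_simps)
qed

lemma mult_power_one_minus_le: "0 \<le> a \<Longrightarrow> a \<le> 1 \<Longrightarrow> real j * a ^ j * (1 - a) \<le> 1 - a ^ j"
proof (induction j)
  case (Suc j)
  have "real (Suc j) * a ^ Suc j * (1 - a) = a * (real j * a ^ j * (1 - a)) + a ^ Suc j * (1 - a)"
    by (simp add: algebra_simps)
  also have "\<dots> \<le> a * (1 - a ^ j) + 1 * (1 - a)"
    using Suc power_le_one[of a "Suc j"] by (intro add_mono mult_left_mono mult_right_mono) auto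
  finally show ?case by (simp add: algebra_simps)
qed simp

lemma M_cycle_strict_antimono_q:
  assumes "0 < \<alpha>" "\<alpha> < 1" "th > 0" "0 \<le> lam" "lam \<le> lam_th th" "1 \<le> j"
    and "0 \<le> q1" "q1 < q2" "q2 \<le> 1"
  shows "M_cycle \<alpha> th lam j q2 < M_cycle \<alpha> th lam j q1"
proof -
  define U where "U = idle_var \<alpha> th lam j"
  have r: "sqrt (lam * th) < 1" using sqrt_mult_less_one assms by simp
  have "\<alpha> ^ j * (1 - sqrt (lam * th)) < 1 * (1 - sqrt (lam * th))"
    using assms r by (intro mult_strict_right_mono) (auto simp: power_less_one_iff)
  then have "sqrt (lam * th) < U"
    by (simp add: U_def idle_var_def)
  moreover have "idle_var \<alpha> th lam i \<le> U" if "i < j" for i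
    using that assms r by (simp add: U_def idle_var_def power_decreasing mult_right_mono)
  then have "(\<Sum>i\<in>{1..<j}. idle_var \<alpha> th lam i) \<le> (real j - 1) * U"
    using sum_mono[of "{1..<j}" "idle_var \<alpha> th lam" "\<lambda>_. U"] assms by (simp add: of_nat_diff)
  ultimately have "(\<Sum>i\<in>{1..<j}. idle_var \<alpha> th lam i) + sqrt (lam * th) < real j * U"
    by (simp add: algebra_simps)
  then show ?thesis
    using affine_ratio_strict_mono[of _ "real j" U "1 - q2" "1 - q1"] assms
    by (simp add: M_cycle_def U_def add_diff_eq)
qed

lemma idle_var_inverse_gap:
  assumes "0 < \<alpha>" "\<alpha> < 1" "0 < sqrt (lam * th)" "sqrt (lam * th) < 1"
  shows "real j * (1 / idle_var \<alpha> th lam j - 1 / idle_var \<alpha> th lam (Suc j))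
           \<le> 1 / sqrt (lam * th) - 1 / idle_var \<alpha> th lam j"
proof -
  define r v w where "r = sqrt (lam * th)" and "v = idle_var \<alpha> th lam j"
    and "w = idle_var \<alpha> th lam (Suc j)"
  have "r \<le> v" "r \<le> w"
    using idle_var_ge_sqrt[of \<alpha> lam th] assms by (auto simp: r_def v_def w_def)
  have "real j * (w - v) = (real j * \<alpha> ^ j * (1 - \<alpha>)) * (1 - r)"
    by (simp add: v_def w_def r_def idle_var_def algebra_simps)
  also have "\<dots> \<le> (1 - \<alpha> ^ j) * (1 - r)"
    using mult_power_one_minus_le[of \<alpha> j] assms by (intro mult_right_mono) (auto simp: r_def)
  also have "\<dots> = v - r"
    by (simp add: v_def r_def idle_var_def algebra_simps)
  finally have gap: "real j * (w - v) \<le> v - r" .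
  have "0 < r"
    using assms by (simp add: r_def)
  then have "0 < v" "0 < w"
    using \<open>r \<le> v\<close> \<open>r \<le> w\<close> by linarith+
  have "real j * (1 / v - 1 / w) = real j * (w - v) / (v * w)"
    using \<open>0 < v\<close> \<open>0 < w\<close> by (simp add: field_simps)
  also have "\<dots> \<le> (v - r) / (v * w)"
    using gap \<open>0 < v\<close> \<open>0 < w\<close> by (intro divide_right_mono) auto
  also have "\<dots> \<le> (v - r) / (v * r)"
    using \<open>0 < r\<close> \<open>0 < v\<close> \<open>r \<le> v\<close> \<open>r \<le> w\<close> by (intro divide_left_mono mult_left_mono) auto
  also have "\<dots> = 1 / r - 1 / v"
    using \<open>0 < r\<close> \<open>0 < v\<close> by (simp add: field_simps)
  finally show ?thesis by (simp add: r_def v_def w_def)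
qed

lemma C_cycle_strict_mono_q:
  assumes "0 < \<alpha>" "\<alpha> < 1" "th > 0" "0 < lam" "lam \<le> lam_th th" "1 \<le> j"
    and "0 \<le> q1" "q1 < q2" "q2 \<le> 1" "NS > 0" "\<phi> > 0" "cTX > 0"
  shows "C_cycle \<alpha> th cTX \<phi> NS lam j q1 < C_cycle \<alpha> th cTX \<phi> NS lam j q2"
proof -
  define c1 c2 where "c1 = tx_cost cTX \<phi> NS th lam (idle_var \<alpha> th lam j)"
    and "c2 = tx_cost cTX \<phi> NS th lam (idle_var \<alpha> th lam (Suc j))"
  have r: "0 < sqrt (lam * th)" "sqrt (lam * th) < 1"
    using assms sqrt_mult_less_one[of th lam] by auto
  have "real j * (c2 - c1) = \<phi> / real NS
      * (real j * (1 / idle_var \<alpha> th lam j - 1 / idle_var \<alpha> th lam (Suc j)))"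
    by (simp add: c1_def c2_def tx_cost_def algebra_simps)
  also have "\<dots> \<le> \<phi> / real NS * (1 / sqrt (lam * th) - 1 / idle_var \<alpha> th lam j)"
    using idle_var_inverse_gap[OF assms(1,2) r] assms by (intro mult_left_mono) auto
  also have "\<dots> < c1"
    using assms by (simp add: c1_def tx_cost_def algebra_simps)
  finally have "- c1 < real j * - (c2 - c1)" by (simp add: algebra_simps)
  then have "(- c1 + (1 - q2) * - (c2 - c1)) / (real j + (1 - q2))
      < (- c1 + (1 - q1) * - (c2 - c1)) / (real j + (1 - q1))"
    using assms by (intro affine_ratio_strict_mono) auto
  moreover have "C_cycle \<alpha> th cTX \<phi> NS lam j q
      = - ((- c1 + (1 - q) * - (c2 - c1)) / (real j + (1 - q)))" for q
    by (simp add: C_cycle_def c1_def c2_def minus_divide_left algebra_simps)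
  ultimately show ?thesis
    by simp
qed

section \<open>The pieces of the parameter set\<close>

definition in_piece :: "real \<Rightarrow> real \<Rightarrow> real \<times> real \<Rightarrow> bool" where
  "in_piece a c x \<longleftrightarrow> (snd x = 1 \<and> a < fst x \<and> fst x < c) \<or> (fst x = c \<and> 0 \<le> snd x \<and> snd x \<le> 1)"

lemma L_set_iff: "x \<in> L_set \<alpha> th \<longleftrightarrow> (\<exists>j\<ge>1. in_piece (lam_star \<alpha> th (j - 1)) (lam_star \<alpha> th j) x)"
  by (cases x) (auto simp: L_set_def in_piece_def)

locale monotone_piece =
  fixes a c :: real and P Q :: "real \<Rightarrow> real" and F :: "real \<times> real \<Rightarrow> real"
  assumes a_nonneg: "0 \<le> a" and a_less_c: "a < c"
    and P_mono: "\<And>s t. a \<le> s \<Longrightarrow> 0 < s \<Longrightarrow> s < t \<Longrightarrow> t \<le> c \<Longrightarrow> P s < P t"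
    and Q_antimono: "\<And>p p'. 0 \<le> p \<Longrightarrow> p < p' \<Longrightarrow> p' \<le> 1 \<Longrightarrow> Q p' < Q p"
    and Q_1: "Q 1 = P c"
    and F_open: "\<And>s. a < s \<Longrightarrow> s < c \<Longrightarrow> F (s, 1) = P s"
    and F_end: "\<And>p. 0 \<le> p \<Longrightarrow> p \<le> 1 \<Longrightarrow> F (c, p) = Q p"
begin

lemma Q_bounds: "0 \<le> p \<Longrightarrow> p \<le> 1 \<Longrightarrow> P c \<le> Q p \<and> Q p \<le> Q 0"
  using Q_antimono[of p 1] Q_antimono[of 0 p] Q_1 by (cases "p = 1"; cases "p = 0") auto

lemma F_open_less: "a < s \<Longrightarrow> s < c \<Longrightarrow> F (s, 1) < P c"
  using F_open P_mono a_nonneg by simp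

lemma F_le_Q_0: "in_piece a c x \<Longrightarrow> F x \<le> Q 0"
  using F_open_less[of "fst x"] F_end[of "snd x"] Q_bounds[of "snd x"] Q_bounds[of 0]
  by (cases x) (auto simp: in_piece_def)

lemma P_a_less_F: "in_piece a c x \<Longrightarrow> 0 < a \<Longrightarrow> P a < F x"
  using F_open P_mono[of a "fst x"] F_end[of "snd x"] Q_bounds[of "snd x"] P_mono[of a c] a_less_c
  by (cases x) (auto simp: in_piece_def)

lemma F_strict_mono:
  assumes "in_piece a c x" "in_piece a c y" "mp_succ x y"
  shows "F y < F x"
  using assms F_open P_mono[of "fst y" "fst x"] F_end Q_antimono[of "snd x" "snd y"]
    F_open_less[of "fst y"] Q_bounds[of "snd x"] a_nonneg
  by (cases x, cases y) (auto simp: in_piece_def mp_succ_def)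

end

lemma piece_end_values_mono:
  fixes ls :: "nat \<Rightarrow> real" and P Q :: "nat \<Rightarrow> real \<Rightarrow> real" and F :: "real \<times> real \<Rightarrow> real"
  assumes ls: "strict_mono ls" "0 \<le> ls 0"
    and piece: "\<And>j. 1 \<le> j \<Longrightarrow> monotone_piece (ls (j - 1)) (ls j) (P j) (Q j) F"
    and glue: "\<And>j. 1 \<le> j \<Longrightarrow> Q j 0 = P (Suc j) (ls j)"
    and "1 \<le> k" "k \<le> m"
  shows "Q k 0 \<le> Q m 0"
  using assms(6,5)
proof (induction m rule: dec_induct)
  case (step n)
  interpret next_piece: monotone_piece "ls n" "ls (Suc n)" "P (Suc n)" "Q (Suc n)" F
    using piece[of "Suc n"] by simp
  have "in_piece (ls n) (ls (Suc n)) (ls (Suc n), 0)"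
    by (simp add: in_piece_def)
  moreover have "0 < ls n"
    using strict_monoD[OF ls(1), of 0 n] ls(2) step by simp
  ultimately show ?case
    using step next_piece.P_a_less_F next_piece.F_le_Q_0 glue[of n] by fastforce
qed simp

lemma piecewise_strict_mono:
  fixes ls :: "nat \<Rightarrow> real" and P Q :: "nat \<Rightarrow> real \<Rightarrow> real" and F :: "real \<times> real \<Rightarrow> real"
  assumes ls: "\<And>j. ls j < ls (Suc j)" "0 \<le> ls 0"
    and piece: "\<And>j. 1 \<le> j \<Longrightarrow> monotone_piece (ls (j - 1)) (ls j) (P j) (Q j) F"
    and glue: "\<And>j. 1 \<le> j \<Longrightarrow> Q j 0 = P (Suc j) (ls j)"
    and x: "1 \<le> jx" "in_piece (ls (jx - 1)) (ls jx) x"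
    and y: "1 \<le> jy" "in_piece (ls (jy - 1)) (ls jy) y"
    and succ: "mp_succ x y"
  shows "F y < F x"
proof -
  have ls_mono: "strict_mono ls" using ls by (simp add: strict_mono_Suc_iff)
  note Q_0_mono = piece_end_values_mono[OF ls_mono ls(2) piece glue]
  consider "jy < jx" | "jx < jy" | "jx = jy" by linarith
  then show ?thesis
  proof cases
    case 1
    interpret piece_x: monotone_piece "ls (jx - 1)" "ls jx" "P jx" "Q jx" F
      using piece x by simp
    interpret piece_y: monotone_piece "ls (jy - 1)" "ls jy" "P jy" "Q jy" F
      using piece y by simp
    have "F y \<le> Q (jx - 1) 0"
      using piece_y.F_le_Q_0[OF y(2)] Q_0_mono[of jy "jx - 1"] 1 y by linarith
    also have "\<dots> < F x"
      using piece_x.P_a_less_F[OF x(2)] glue[of "jx - 1"] strict_monoD[OF ls_mono, of 0 "jx - 1"] ls(2) 1 y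
      by simp
    finally show ?thesis .
  next
    case 2
    then have "ls jx < ls jy"
      using strict_mono_less[OF ls_mono] by simp
    moreover have "ls jx \<le> ls (jy - 1)"
      using 2 strict_mono_less_eq[OF ls_mono] by simp
    ultimately show ?thesis
      using x y succ by (auto simp: in_piece_def mp_succ_def)
  next
    case 3
    interpret monotone_piece "ls (jx - 1)" "ls jx" "P jx" "Q jx" F
      using piece x by simp
    show ?thesis using F_strict_mono x y succ 3 by simp
  qed
qed

section \<open>The averages on the parameter set\<close>

definition mp_point :: "real \<Rightarrow> real \<Rightarrow> real \<Rightarrow> nat \<Rightarrow> real \<times> real \<Rightarrow> real \<times> real" where
  "mp_point \<alpha> cTX \<phi> NS x = (C_MP \<alpha> cTX \<phi> NS (fst x) (snd x), M_MP \<alpha> cTX \<phi> (fst x) (snd x))"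

text \<open>Continuity in the order topology of \<open>mp_succ\<close> on the piece \<open>(a, c]\<close>,
  including the jump to the next piece \<open>(c, c']\<close>.\<close>

definition piece_continuous :: "(real \<times> real \<Rightarrow> 'a::topological_space) \<Rightarrow> real \<Rightarrow> real \<Rightarrow> real \<Rightarrow> bool" where
  "piece_continuous F a c c' \<longleftrightarrow>
     continuous_on {a<..<c} (\<lambda>s. F (s, 1)) \<and> continuous_on {0..1} (\<lambda>p. F (c, p))
     \<and> ((\<lambda>s. F (s, 1)) \<longlongrightarrow> F (c, 1)) (at c within {a<..<c})
     \<and> ((\<lambda>s. F (s, 1)) \<longlongrightarrow> F (c, 0)) (at c within {c<..<c'})"

lemma tendsto_within_isCont_eq:
  assumes "isCont f c" "\<And>s. s \<in> S \<Longrightarrow> g s = f s"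
  shows "(g \<longlongrightarrow> f c) (at c within S)"
proof -
  have "(f \<longlongrightarrow> f c) (at c within S)"
    using assms(1) continuous_at_imp_continuous_at_within continuous_within by blast
  moreover have "eventually (\<lambda>s. f s = g s) (at c within S)"
    using assms(2) by (auto simp: eventually_at_filter)
  ultimately show ?thesis by (rule tendsto_cong[THEN iffD1, rotated])
qed

lemma piece_continuousI:
  fixes F :: "real \<times> real \<Rightarrow> 'a::topological_space"
  assumes F_open: "\<And>s. a < s \<Longrightarrow> s < c \<Longrightarrow> F (s, 1) = P s"
    and F_end: "\<And>p. 0 \<le> p \<Longrightarrow> p \<le> 1 \<Longrightarrow> F (c, p) = Q p"
    and P_cont: "\<And>s. a < s \<Longrightarrow> s \<le> c \<Longrightarrow> isCont P s"
    and Q_cont: "continuous_on {0..1} Q" and Q_1: "Q 1 = P c"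
    and right_limit: "((\<lambda>s. F (s, 1)) \<longlongrightarrow> Q 0) (at c within {c<..<c'})"
  shows "piece_continuous F a c c'"
  unfolding piece_continuous_def
proof (intro conjI)
  show "continuous_on {a<..<c} (\<lambda>s. F (s, 1))"
    using continuous_at_imp_continuous_on[of "{a<..<c}" P] P_cont F_open
    by (auto intro: continuous_on_cong[THEN iffD1, rotated])
  show "continuous_on {0..1} (\<lambda>p. F (c, p))"
    using Q_cont F_end by (auto intro: continuous_on_cong[THEN iffD1, rotated])
  show "((\<lambda>s. F (s, 1)) \<longlongrightarrow> F (c, 1)) (at c within {a<..<c})"
  proof (cases "a < c")
    case True
    then show ?thesis
      using tendsto_within_isCont_eq[where f = P and c = c and S = "{a<..<c}"]
        P_cont F_open F_end[of 1] Q_1 by simp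
  qed simp
  show "((\<lambda>s. F (s, 1)) \<longlongrightarrow> F (c, 0)) (at c within {c<..<c'})"
    using right_limit F_end[of 0] by simp
qed

text \<open>Without memory (\<open>\<alpha> = 0\<close>) the chain never leaves the prior variance 1.\<close>

lemma mp_avg_tendsto_alpha_0:
  "mp_avg 0 th lam p0 g \<longlonglongrightarrow> measure_pmf.expectation (tx_decision th lam p0 1) (g 1)"
proof -
  interpret mp_invariant_set 0 th lam p0 "{1}"
    by unfold_locales (simp_all add: mp_next_def)
  show ?thesis
    by (rule mp_avg_tendsto_gain[of g "\<lambda>_. 0"]) (simp_all add: mp_next_def)
qed

context
  fixes cTX \<phi> th :: real and NS :: nat
  defines th_def: "th \<equiv> \<phi> / cTX"
  assumes costs: "cTX > 0" "\<phi> > 0"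
begin

lemma th_pos: "th > 0"
  using costs by (simp add: th_def)

context
  fixes \<alpha> :: real
  assumes alpha: "0 < \<alpha>" "\<alpha> < 1"
begin

lemma mp_values_between_lam_star:
  assumes "1 \<le> j" "lam_star \<alpha> th (j - 1) < lam" "lam < lam_star \<alpha> th j"
  shows "M_MP \<alpha> cTX \<phi> lam 1 = M_cycle \<alpha> th lam j 1"
    and "C_MP \<alpha> cTX \<phi> NS lam 1 = C_cycle \<alpha> th cTX \<phi> NS lam j 1"
  using tx_cycle.M_MP_eq_M_cycle tx_cycle.C_MP_eq_C_cycle meta_eq_to_obj_eq[OF th_def]
    tx_cycle_between_lam_star[OF th_pos alpha assms] by blast+

lemma mp_values_at_lam_star:
  assumes "1 \<le> j" "0 \<le> p" "p \<le> 1"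
  shows "M_MP \<alpha> cTX \<phi> (lam_star \<alpha> th j) p = M_cycle \<alpha> th (lam_star \<alpha> th j) j p"
    and "C_MP \<alpha> cTX \<phi> NS (lam_star \<alpha> th j) p = C_cycle \<alpha> th cTX \<phi> NS (lam_star \<alpha> th j) j p"
  using tx_cycle.M_MP_eq_M_cycle tx_cycle.C_MP_eq_C_cycle meta_eq_to_obj_eq[OF th_def]
    tx_cycle_at_lam_star[OF th_pos alpha assms] by blast+

lemma lam_star_ordered:
  "0 \<le> lam_star \<alpha> th j" "lam_star \<alpha> th j < lam_star \<alpha> th (Suc j)"
    "1 \<le> j \<Longrightarrow> 0 < lam_star \<alpha> th j \<and> lam_star \<alpha> th j < lam_th th"
  using lam_star_root[OF th_pos _ alpha(2)] lam_star_strict_mono[OF th_pos alpha]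
    lam_star_bounds[OF th_pos alpha] alpha by auto

lemma cycle_point_continuous:
  assumes "0 < s" "s \<le> lam_th th" "1 \<le> k"
  shows "isCont (\<lambda>l. (C_cycle \<alpha> th cTX \<phi> NS l k 1, M_cycle \<alpha> th l k 1)) s"
  using assms C_cycle_continuous[of \<alpha> th s k 1] M_cycle_continuous[of k 1] alpha th_pos
  by (intro continuous_intros) auto

lemma mp_piece_continuous_alpha_pos:
  assumes j: "1 \<le> j"
  shows "piece_continuous (mp_point \<alpha> cTX \<phi> NS)
           (lam_star \<alpha> th (j - 1)) (lam_star \<alpha> th j) (lam_star \<alpha> th (Suc j))"
proof (rule piece_continuousI)
  let ?P = "\<lambda>k l. (C_cycle \<alpha> th cTX \<phi> NS l k 1, M_cycle \<alpha> th l k 1)"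
  show "mp_point \<alpha> cTX \<phi> NS (s, 1) = ?P j s" if "lam_star \<alpha> th (j - 1) < s" "s < lam_star \<alpha> th j" for s
    using mp_values_between_lam_star[OF j that] by (simp add: mp_point_def)
  show "mp_point \<alpha> cTX \<phi> NS (lam_star \<alpha> th j, p)
      = (C_cycle \<alpha> th cTX \<phi> NS (lam_star \<alpha> th j) j p, M_cycle \<alpha> th (lam_star \<alpha> th j) j p)"
    if "0 \<le> p" "p \<le> 1" for p
    using mp_values_at_lam_star[OF j that] by (simp add: mp_point_def)
  show "isCont (?P j) s" if "lam_star \<alpha> th (j - 1) < s" "s \<le> lam_star \<alpha> th j" for s
    using that lam_star_ordered(1)[of "j - 1"] lam_star_ordered(3)[OF j] j
    by (intro cycle_point_continuous) auto
  show "continuous_on {0..1}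
      (\<lambda>p. (C_cycle \<alpha> th cTX \<phi> NS (lam_star \<alpha> th j) j p, M_cycle \<alpha> th (lam_star \<alpha> th j) j p))"
    using C_cycle_continuous_on_q[OF j] M_cycle_continuous_on_q[OF j] by (intro continuous_on_Pair)
  have "isCont (?P (Suc j)) (lam_star \<alpha> th j)"
    using lam_star_ordered(3)[OF j] by (intro cycle_point_continuous) auto
  then show "((\<lambda>s. mp_point \<alpha> cTX \<phi> NS (s, 1)) \<longlongrightarrow>
      (C_cycle \<alpha> th cTX \<phi> NS (lam_star \<alpha> th j) j 0, M_cycle \<alpha> th (lam_star \<alpha> th j) j 0))
      (at (lam_star \<alpha> th j) within {lam_star \<alpha> th j<..<lam_star \<alpha> th (Suc j)})"
    using tendsto_within_isCont_eq[where f = "?P (Suc j)" and c = "lam_star \<alpha> th j"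
        and S = "{lam_star \<alpha> th j<..<lam_star \<alpha> th (Suc j)}"]
      mp_values_between_lam_star[of "Suc j"] C_cycle_shift M_cycle_shift[OF j]
    by (simp add: mp_point_def)
qed simp

lemma lam_star_pred_less: "1 \<le> j \<Longrightarrow> lam_star \<alpha> th (j - 1) < lam_star \<alpha> th j"
  using lam_star_ordered(2)[of "j - 1"] by simp

lemma monotone_piece_M_MP:
  assumes j: "1 \<le> j"
  shows "monotone_piece (lam_star \<alpha> th (j - 1)) (lam_star \<alpha> th j) (\<lambda>s. M_cycle \<alpha> th s j 1)
           (M_cycle \<alpha> th (lam_star \<alpha> th j) j) (\<lambda>z. M_MP \<alpha> cTX \<phi> (fst z) (snd z))"
proof
  show "M_cycle \<alpha> th s j 1 < M_cycle \<alpha> th t j 1" if "0 < s" "s < t" for s t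
    using that alpha th_pos j by (intro M_cycle_strict_mono_lam) auto
  show "M_cycle \<alpha> th (lam_star \<alpha> th j) j p' < M_cycle \<alpha> th (lam_star \<alpha> th j) j p"
    if "0 \<le> p" "p < p'" "p' \<le> 1" for p p'
    using that alpha th_pos j lam_star_ordered(3)[OF j] by (intro M_cycle_strict_antimono_q) auto
qed (use j lam_star_ordered(1) lam_star_pred_less mp_values_between_lam_star(1)
    mp_values_at_lam_star(1) in auto)

lemma monotone_piece_C_MP:
  assumes j: "1 \<le> j" and NS: "NS > 0"
  shows "monotone_piece (lam_star \<alpha> th (j - 1)) (lam_star \<alpha> th j) (\<lambda>s. - C_cycle \<alpha> th cTX \<phi> NS s j 1)
           (\<lambda>p. - C_cycle \<alpha> th cTX \<phi> NS (lam_star \<alpha> th j) j p) (\<lambda>z. - C_MP \<alpha> cTX \<phi> NS (fst z) (snd z))"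
proof
  show "- C_cycle \<alpha> th cTX \<phi> NS s j 1 < - C_cycle \<alpha> th cTX \<phi> NS t j 1"
    if "0 < s" "s < t" "t \<le> lam_star \<alpha> th j" for s t
    using that alpha th_pos j NS costs lam_star_ordered(3)[OF j]
    by (simp add: C_cycle_strict_antimono_lam)
  show "- C_cycle \<alpha> th cTX \<phi> NS (lam_star \<alpha> th j) j p' < - C_cycle \<alpha> th cTX \<phi> NS (lam_star \<alpha> th j) j p"
    if "0 \<le> p" "p < p'" "p' \<le> 1" for p p'
    using that alpha th_pos j NS costs lam_star_ordered(3)[OF j]
    by (simp add: C_cycle_strict_mono_q)
qed (use j lam_star_ordered(1) lam_star_pred_less mp_values_between_lam_star(2)
    mp_values_at_lam_star(2) in auto)

lemma mp_strict_order_alpha_pos: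
  assumes NS: "NS > 0" and x: "x \<in> L_set \<alpha> th" and y: "y \<in> L_set \<alpha> th"
    and succ: "mp_succ x y"
  shows "C_MP \<alpha> cTX \<phi> NS (fst x) (snd x) < C_MP \<alpha> cTX \<phi> NS (fst y) (snd y)
       \<and> M_MP \<alpha> cTX \<phi> (fst y) (snd y) < M_MP \<alpha> cTX \<phi> (fst x) (snd x)"
proof -
  obtain jx jy where "1 \<le> jx" "in_piece (lam_star \<alpha> th (jx - 1)) (lam_star \<alpha> th jx) x"
    and "1 \<le> jy" "in_piece (lam_star \<alpha> th (jy - 1)) (lam_star \<alpha> th jy) y"
    using x y by (auto simp: L_set_iff)
  note pieces = this succ
  show ?thesis
    using piecewise_strict_mono[OF lam_star_ordered(2,1) monotone_piece_M_MP _ pieces]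
      piecewise_strict_mono[OF lam_star_ordered(2,1) monotone_piece_C_MP[OF _ NS] _ pieces]
      M_cycle_shift C_cycle_shift
    by simp
qed

end

context
  fixes LT :: real
  defines LT_def: "LT \<equiv> lam_th th"
begin

lemma LT_pos: "LT > 0"
  using lam_th_pos[OF th_pos] by (simp add: LT_def)

lemma mp_values_alpha_0_below:
  assumes "0 < lam" "lam < LT"
  shows "M_MP 0 cTX \<phi> lam p0 = sqrt (lam * th)" "C_MP 0 cTX \<phi> NS lam p0 = tx_cost cTX \<phi> NS th lam 1"
proof -
  have "tx_decision th lam p0 1 = return_pmf True"
    using v_th_less_one[OF th_pos] assms by (simp add: tx_decision_above LT_def th_def)
  then show "M_MP 0 cTX \<phi> lam p0 = sqrt (lam * th)" "C_MP 0 cTX \<phi> NS lam p0 = tx_cost cTX \<phi> NS th lam 1"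
    using limI[OF mp_avg_tendsto_alpha_0]
    by (simp_all add: M_MP_eq_lim C_MP_eq_lim V_hat_tx tx_cost_def t_ind_def S_M_def th_def)
qed

lemma mp_values_alpha_0_at:
  assumes "0 \<le> p" "p \<le> 1"
  shows "M_MP 0 cTX \<phi> LT p = p * sqrt (LT * th) + (1 - p)"
    and "C_MP 0 cTX \<phi> NS LT p = p * tx_cost cTX \<phi> NS th LT 1"
proof -
  have "tx_decision th LT p 1 = bernoulli_pmf p"
    using tx_decision_at[of th LT p] v_th_lam_th[OF th_pos] by (simp add: LT_def th_def)
  then show "M_MP 0 cTX \<phi> LT p = p * sqrt (LT * th) + (1 - p)"
    "C_MP 0 cTX \<phi> NS LT p = p * tx_cost cTX \<phi> NS th LT 1"
    using limI[OF mp_avg_tendsto_alpha_0] assms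
    by (simp_all add: M_MP_eq_lim C_MP_eq_lim V_hat_tx tx_cost_def t_ind_def S_M_def th_def)
qed

lemma lam_star_alpha_0_cases:
  "lam_star 0 th 0 = 0" "1 \<le> j \<Longrightarrow> lam_star 0 th j = LT"
  using lam_star_0[OF th_pos] lam_star_alpha_0[OF th_pos] by (simp_all add: LT_def th_def)

lemma mp_piece_continuous_alpha_0:
  assumes j: "1 \<le> j"
  shows "piece_continuous (mp_point 0 cTX \<phi> NS)
           (lam_star 0 th (j - 1)) (lam_star 0 th j) (lam_star 0 th (Suc j))"
proof -
  have ls: "lam_star 0 th j = LT" "lam_star 0 th (Suc j) = LT"
    using lam_star_alpha_0_cases(2) j by simp_all
  have "0 \<le> lam_star 0 th (j - 1)"
    using lam_star_alpha_0_cases(1) lam_star_alpha_0_cases(2)[of "j - 1"] LT_pos j by (cases "j = 1") auto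
  show ?thesis
    unfolding ls(1,2)
  proof (rule piece_continuousI)
    show "mp_point 0 cTX \<phi> NS (s, 1) = (tx_cost cTX \<phi> NS th s 1, sqrt (s * th))"
      if "lam_star 0 th (j - 1) < s" "s < LT" for s
      using that \<open>0 \<le> lam_star 0 th (j - 1)\<close> mp_values_alpha_0_below[of s] by (simp add: mp_point_def)
    show "mp_point 0 cTX \<phi> NS (LT, p) = (p * tx_cost cTX \<phi> NS th LT 1, p * sqrt (LT * th) + (1 - p))"
      if "0 \<le> p" "p \<le> 1" for p
      using that mp_values_alpha_0_at by (simp add: mp_point_def)
    show "isCont (\<lambda>s. (tx_cost cTX \<phi> NS th s 1, sqrt (s * th))) s"
      if "lam_star 0 th (j - 1) < s" for s
      using that \<open>0 \<le> lam_star 0 th (j - 1)\<close> th_pos unfolding tx_cost_def by (intro continuous_intros) auto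
  qed (auto intro!: continuous_intros)
qed

lemma sqrt_LT_less_one: "sqrt (LT * th) < 1"
  using sqrt_lam_th_mult_less_one[OF th_pos] by (simp add: LT_def th_def)

lemma monotone_piece_M_MP_alpha_0:
  "monotone_piece 0 LT (\<lambda>s. sqrt (s * th)) (\<lambda>p. p * sqrt (LT * th) + (1 - p))
     (\<lambda>z. M_MP 0 cTX \<phi> (fst z) (snd z))"
proof
  show "p' * sqrt (LT * th) + (1 - p') < p * sqrt (LT * th) + (1 - p)" if "p < p'" for p p'
    using that sqrt_LT_less_one mult_strict_left_mono[of p p' "1 - sqrt (LT * th)"]
    by (simp add: algebra_simps)
qed (use th_pos LT_pos mp_values_alpha_0_below mp_values_alpha_0_at in auto)

lemma tx_cost_strict_antimono:
  assumes "NS > 0" "0 < s" "s < t"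
  shows "tx_cost cTX \<phi> NS th t v < tx_cost cTX \<phi> NS th s v"
proof -
  have "1 / sqrt (t * th) < 1 / sqrt (s * th)"
    using assms th_pos by (intro divide_strict_left_mono) auto
  then show ?thesis
    using assms costs by (simp add: tx_cost_def divide_strict_right_mono)
qed

lemma monotone_piece_C_MP_alpha_0:
  assumes NS: "NS > 0"
  shows "monotone_piece 0 LT (\<lambda>s. - tx_cost cTX \<phi> NS th s 1) (\<lambda>p. - (p * tx_cost cTX \<phi> NS th LT 1))
           (\<lambda>z. - C_MP 0 cTX \<phi> NS (fst z) (snd z))"
proof
  have "1 < 1 / sqrt (LT * th)"
    using sqrt_LT_less_one th_pos LT_pos by simp
  then have "0 < tx_cost cTX \<phi> NS th LT 1"
    using costs NS by (simp add: tx_cost_def add_pos_pos)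
  then show "- (p' * tx_cost cTX \<phi> NS th LT 1) < - (p * tx_cost cTX \<phi> NS th LT 1)" if "p < p'" for p p'
    using that by simp
qed (use th_pos LT_pos tx_cost_strict_antimono[OF NS] mp_values_alpha_0_below mp_values_alpha_0_at in auto)

lemma L_set_alpha_0: "x \<in> L_set 0 th \<Longrightarrow> in_piece 0 LT x"
proof -
  assume "x \<in> L_set 0 th"
  then obtain j where j: "1 \<le> j" "in_piece (lam_star 0 th (j - 1)) (lam_star 0 th j) x"
    by (auto simp: L_set_iff)
  moreover have "lam_star 0 th (j - 1) = 0 \<or> lam_star 0 th (j - 1) = LT"
    using lam_star_alpha_0_cases(1) lam_star_alpha_0_cases(2)[of "j - 1"] j(1) by (cases "j = 1") auto
  ultimately show ?thesis using lam_star_alpha_0_cases(2)[OF j(1)] by (auto simp: in_piece_def)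
qed

lemma mp_strict_order_alpha_0:
  assumes NS: "NS > 0" and x: "x \<in> L_set 0 th" and y: "y \<in> L_set 0 th" and succ: "mp_succ x y"
  shows "C_MP 0 cTX \<phi> NS (fst x) (snd x) < C_MP 0 cTX \<phi> NS (fst y) (snd y)
       \<and> M_MP 0 cTX \<phi> (fst y) (snd y) < M_MP 0 cTX \<phi> (fst x) (snd x)"
  using L_set_alpha_0[OF x] L_set_alpha_0[OF y] succ
    monotone_piece.F_strict_mono[OF monotone_piece_M_MP_alpha_0]
    monotone_piece.F_strict_mono[OF monotone_piece_C_MP_alpha_0[OF NS]]
  by fastforce

end

end

theorem proposition2:
  fixes \<alpha> cTX \<phi> :: real and NS B :: nat
  assumes "0 \<le> \<alpha>" "\<alpha> < 1" "cTX > 0" "\<phi> > 0" "1 \<le> B" "B \<le> NS"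
  shows
   "(\<forall>j\<ge>1.
       continuous_on {lam_star \<alpha> (\<phi>/cTX) (j - 1) <..< lam_star \<alpha> (\<phi>/cTX) j}
         (\<lambda>lam. (C_MP \<alpha> cTX \<phi> NS lam 1, M_MP \<alpha> cTX \<phi> lam 1))
     \<and> continuous_on {0..1}
         (\<lambda>p0. (C_MP \<alpha> cTX \<phi> NS (lam_star \<alpha> (\<phi>/cTX) j) p0,
                M_MP \<alpha> cTX \<phi> (lam_star \<alpha> (\<phi>/cTX) j) p0))
     \<and> ((\<lambda>lam. (C_MP \<alpha> cTX \<phi> NS lam 1, M_MP \<alpha> cTX \<phi> lam 1))
          \<longlongrightarrow> (C_MP \<alpha> cTX \<phi> NS (lam_star \<alpha> (\<phi>/cTX) j) 1,
               M_MP \<alpha> cTX \<phi> (lam_star \<alpha> (\<phi>/cTX) j) 1))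
         (at (lam_star \<alpha> (\<phi>/cTX) j)
            within {lam_star \<alpha> (\<phi>/cTX) (j - 1) <..< lam_star \<alpha> (\<phi>/cTX) j})
     \<and> ((\<lambda>lam. (C_MP \<alpha> cTX \<phi> NS lam 1, M_MP \<alpha> cTX \<phi> lam 1))
          \<longlongrightarrow> (C_MP \<alpha> cTX \<phi> NS (lam_star \<alpha> (\<phi>/cTX) j) 0,
               M_MP \<alpha> cTX \<phi> (lam_star \<alpha> (\<phi>/cTX) j) 0))
         (at (lam_star \<alpha> (\<phi>/cTX) j)
            within {lam_star \<alpha> (\<phi>/cTX) j <..< lam_star \<alpha> (\<phi>/cTX) (Suc j)}))
    \<and> (\<forall>x\<in>L_set \<alpha> (\<phi>/cTX). \<forall>y\<in>L_set \<alpha> (\<phi>/cTX). mp_succ x y \<longrightarrow>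
         C_MP \<alpha> cTX \<phi> NS (fst x) (snd x) < C_MP \<alpha> cTX \<phi> NS (fst y) (snd y)
       \<and> M_MP \<alpha> cTX \<phi> (fst x) (snd x) > M_MP \<alpha> cTX \<phi> (fst y) (snd y))"
proof -
  have NS: "NS > 0" using assms by simp
  have alpha: "\<alpha> = 0 \<or> 0 < \<alpha>" using assms by auto
  have "piece_continuous (mp_point \<alpha> cTX \<phi> NS)
      (lam_star \<alpha> (\<phi>/cTX) (j - 1)) (lam_star \<alpha> (\<phi>/cTX) j) (lam_star \<alpha> (\<phi>/cTX) (Suc j))"
    if "1 \<le> j" for j
    using alpha mp_piece_continuous_alpha_0[OF assms(3,4) that]
      mp_piece_continuous_alpha_pos[OF assms(3,4) _ assms(2) that] by auto
  moreover have "C_MP \<alpha> cTX \<phi> NS (fst x) (snd x) < C_MP \<alpha> cTX \<phi> NS (fst y) (snd y)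
       \<and> M_MP \<alpha> cTX \<phi> (fst y) (snd y) < M_MP \<alpha> cTX \<phi> (fst x) (snd x)"
    if "x \<in> L_set \<alpha> (\<phi>/cTX)" "y \<in> L_set \<alpha> (\<phi>/cTX)" "mp_succ x y" for x y
    using alpha that mp_strict_order_alpha_0[OF assms(3,4) NS]
      mp_strict_order_alpha_pos[OF assms(3,4) _ assms(2) NS] by auto
  ultimately show ?thesis
    by (simp add: piece_continuous_def mp_point_def)
qed

end
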